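(* Let $L$ be a countable C-lattice domain in which every element is a join of principal elements. If $L$ is sharp, then $L$ is a Dedekind lattice, i.e. every element of $L$ is principal.
   Context: A multiplicative lattice is a complete lattice $(L,\le)$ with bottom $0$ and top $1$ which is also a commutative monoid with identity $1$ such that $a(\bigvee_\alpha b_\alpha)=\bigvee_\alpha(ab_\alpha)$ for all $a,b_\alpha\in L$. For $x,y\in L$, $(y:x)=\bigvee\{a\in L: ax\le y\}$. An element $c$ is compact if $c\le\bigvee S$ implies $c\le\bigvee T$ for some finite $T\subseteq S$. A C-lattice is a multiplicative lattice in which $1$ is compact, the product of two compact elements is compact, and every element is a join of compact elements. A proper element $p\ne1$ is prime if $xy\le p$ implies $x\le p$ or $y\le p$; $L$ is a domain if $0$ is prime. An element $x$ is principal if $y\wedge zx=((y:x)\wedge z)x$ and $y\vee(z:x)=((yx\vee z):x)$ for all $y,z\in L$. $L$ is sharp if whenever $a_1a_2\le b$ with $a_1,a_2,b\in L$, there exist $b_1,b_2\in L$ with $a_i\le b_i$ ($i=1,2$) and $b=b_1b_2$. *)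

theory Defs
  imports Main "HOL-Library.Countable_Set"
begin

definition mult_lattice :: "('a::complete_lattice \<Rightarrow> 'a \<Rightarrow> 'a) \<Rightarrow> bool" where
  "mult_lattice m \<longleftrightarrow>
     (\<forall>a b c. m (m a b) c = m a (m b c)) \<and>
     (\<forall>a b. m a b = m b a) \<and>
     (\<forall>a. m a top = a) \<and>
     (\<forall>a B. m a (Sup B) = Sup (m a ` B))"

definition ml_res :: "('a::complete_lattice \<Rightarrow> 'a \<Rightarrow> 'a) \<Rightarrow> 'a \<Rightarrow> 'a \<Rightarrow> 'a" where
  "ml_res m y x = Sup {a. m a x \<le> y}"

definition ml_compact :: "'a::complete_lattice \<Rightarrow> bool" where
  "ml_compact c \<longleftrightarrow> (\<forall>S. c \<le> Sup S \<longrightarrow> (\<exists>T\<subseteq>S. finite T \<and> c \<le> Sup T))"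

definition C_lattice :: "('a::complete_lattice \<Rightarrow> 'a \<Rightarrow> 'a) \<Rightarrow> bool" where
  "C_lattice (m::'a\<Rightarrow>'a\<Rightarrow>'a) \<longleftrightarrow> mult_lattice m \<and> ml_compact (top::'a) \<and>
     (\<forall>a b. ml_compact a \<and> ml_compact b \<longrightarrow> ml_compact (m a b)) \<and>
     (\<forall>x::'a. \<exists>S. (\<forall>c\<in>S. ml_compact c) \<and> x = Sup S)"

definition ml_prime :: "('a::complete_lattice \<Rightarrow> 'a \<Rightarrow> 'a) \<Rightarrow> 'a \<Rightarrow> bool" where
  "ml_prime m p \<longleftrightarrow> p \<noteq> top \<and> (\<forall>x y. m x y \<le> p \<longrightarrow> x \<le> p \<or> y \<le> p)"

definition ml_domain :: "('a::complete_lattice \<Rightarrow> 'a \<Rightarrow> 'a) \<Rightarrow> bool" where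
  "ml_domain m \<longleftrightarrow> ml_prime m bot"

definition ml_principal :: "('a::complete_lattice \<Rightarrow> 'a \<Rightarrow> 'a) \<Rightarrow> 'a \<Rightarrow> bool" where
  "ml_principal m x \<longleftrightarrow>
     (\<forall>y z. inf y (m z x) = m (inf (ml_res m y x) z) x \<and>
            sup y (ml_res m z x) = ml_res m (sup (m y x) z) x)"

definition ml_sharp :: "('a::complete_lattice \<Rightarrow> 'a \<Rightarrow> 'a) \<Rightarrow> bool" where
  "ml_sharp m \<longleftrightarrow> (\<forall>a1 a2 b. m a1 a2 \<le> b \<longrightarrow>
      (\<exists>b1 b2. a1 \<le> b1 \<and> a2 \<le> b2 \<and> b = m b1 b2))"

end

theory Submission
  imports Defs
begin

(* Call a finite product of nonzero principal primes a prime product. Sharpness makes every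
   nonzero principal prime maximal, so every element above a prime product factors into
   principal elements and is therefore principal. Since every nonzero element lies above a
   nonzero principal one, it suffices that every nonzero principal u is a prime product.

   If u is not, sharpness and cancellation provide principal x, y >= u, neither a prime
   product, with x y not below u; the delicate case, a nonzero principal element below all
   powers of a proper principal element, is excluded by a Krull-intersection argument.
   Writing u = r y, the interval [t u, t] then contains the disjoint intervals [t x, t] and
   [t u, t r] of the same shape. Descending through these intervals while avoiding the n-th element of an
   enumeration of L at step n gives nested intervals whose common point, the join of their
   lower ends, is never enumerated: L is uncountable. *)

lemma uncountable_if_splitting_intervals:
  fixes \<I> :: "'a::complete_lattice set set"
  assumes "I \<in> \<I>"
    and intervals: "\<And>J. J \<in> \<I> \<Longrightarrow> \<exists>a b. a \<le> b \<and> J = {a..b}"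
    and splitting: "\<And>J. J \<in> \<I> \<Longrightarrow> \<exists>K\<in>\<I>. \<exists>K'\<in>\<I>. K \<subseteq> J \<and> K' \<subseteq> J \<and> K \<inter> K' = {}"
  shows "uncountable (UNIV :: 'a set)"
proof
  assume countable: "countable (UNIV :: 'a set)"
  define e where "e = from_nat_into (UNIV :: 'a set)"
  have avoiding: "\<exists>K. K \<in> \<I> \<and> K \<subseteq> J \<and> z \<notin> K" if "J \<in> \<I>" for J z
    using splitting[OF that] by blast
  define S where "S = rec_nat I (\<lambda>n J. SOME K. K \<in> \<I> \<and> K \<subseteq> J \<and> e n \<notin> K)"
  have S_Suc: "S (Suc n) = (SOME K. K \<in> \<I> \<and> K \<subseteq> S n \<and> e n \<notin> K)" for n
    by (simp add: S_def)
  have S_mem: "S n \<in> \<I>" for n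
  proof (induction n)
    case 0
    then show ?case using \<open>I \<in> \<I>\<close> by (simp add: S_def)
  next
    case (Suc n)
    then show ?case unfolding S_Suc using someI_ex[OF avoiding[OF Suc.IH, of "e n"]] by blast
  qed
  have S_step: "S (Suc n) \<subseteq> S n \<and> e n \<notin> S (Suc n)" for n
    unfolding S_Suc using someI_ex[OF avoiding[OF S_mem[of n], of "e n"]] by blast
  have S_closed: "S n \<noteq> {} \<and> S n = {Inf (S n)..Sup (S n)}" for n
  proof -
    obtain a b where "a \<le> b" "S n = {a..b}" using intervals[OF S_mem[of n]] by blast
    then show ?thesis by simp
  qed
  have Inf_le_Sup: "Inf (S n) \<le> Sup (S k)" for n k
  proof -
    have "S (max n k) \<subseteq> S n" "S (max n k) \<subseteq> S k"
      using lift_Suc_antimono_le[of S, OF conjunct1[OF S_step]] by simp_all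
    moreover obtain w where "w \<in> S (max n k)" using S_closed by blast
    ultimately have "Inf (S n) \<le> w" "w \<le> Sup (S k)" by (auto intro: Inf_lower Sup_upper)
    then show ?thesis by (rule order_trans)
  qed
  define z where "z = Sup (range (\<lambda>n. Inf (S n)))"
  have "z \<in> S k" for k
  proof -
    have "Inf (S k) \<le> z" "z \<le> Sup (S k)"
      unfolding z_def using Inf_le_Sup by (auto intro: SUP_upper SUP_least)
    then show ?thesis using S_closed[of k] by auto
  qed
  moreover obtain n where "e n = z" unfolding e_def using from_nat_into_surj[OF countable] by blast
  ultimately show False using S_step by blast
qed

locale multiplicative_lattice =
  fixes m :: "'a::complete_lattice \<Rightarrow> 'a \<Rightarrow> 'a"
  assumes mult_lattice: "mult_lattice m"
begin

abbreviation res :: "'a \<Rightarrow> 'a \<Rightarrow> 'a" where "res \<equiv> ml_res m"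
abbreviation principal :: "'a \<Rightarrow> bool" where "principal \<equiv> ml_principal m"

lemma mult_assoc: "m (m a b) c = m a (m b c)"
  and mult_commute: "m a b = m b a"
  and mult_top: "m a top = a"
  and mult_Sup: "m a (Sup B) = Sup (m a ` B)"
  using mult_lattice unfolding mult_lattice_def by blast+

lemma mult_left_commute: "m a (m b c) = m b (m a c)"
  by (metis mult_assoc mult_commute)

lemmas mult_ac = mult_assoc mult_commute mult_left_commute

lemma top_mult: "m top a = a"
  by (metis mult_commute mult_top)

lemma mult_bot [simp]: "m a bot = bot"
  using mult_Sup[of a "{}"] by simp

lemma bot_mult [simp]: "m bot a = bot"
  by (metis mult_commute mult_bot)

lemma mult_sup_right: "m c (sup a b) = sup (m c a) (m c b)"
  using mult_Sup[of c "{a, b}"] by simp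

lemma mult_sup_left: "m (sup a b) c = sup (m a c) (m b c)"
  by (metis mult_commute mult_sup_right)

lemma mult_mono_right: "a \<le> b \<Longrightarrow> m c a \<le> m c b"
  by (metis mult_sup_right sup.absorb_iff2)

lemma mult_mono_left: "a \<le> b \<Longrightarrow> m a c \<le> m b c"
  by (metis mult_commute mult_mono_right)

lemma mult_le_left: "m a b \<le> a"
  by (metis mult_mono_right mult_top top_greatest)

lemma mult_le_right: "m a b \<le> b"
  by (metis mult_commute mult_le_left)

lemma res_mult_le: "m (res y x) x \<le> y"
proof -
  have "m (res y x) x = Sup ((\<lambda>a. m x a) ` {a. m a x \<le> y})"
    by (simp add: ml_res_def mult_commute mult_Sup)
  also have "\<dots> \<le> y" by (auto intro!: Sup_least simp: mult_commute)
  finally show ?thesis .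
qed

lemma le_res_iff: "a \<le> res y x \<longleftrightarrow> m a x \<le> y"
proof
  show "a \<le> res y x \<Longrightarrow> m a x \<le> y" by (rule order_trans[OF mult_mono_left res_mult_le])
  show "m a x \<le> y \<Longrightarrow> a \<le> res y x" unfolding ml_res_def by (auto intro: Sup_upper)
qed

lemma le_res: "y \<le> res y x"
  by (simp add: le_res_iff mult_le_left)

lemma res_res: "res (res z x) y = res z (m x y)"
proof -
  have "a \<le> res (res z x) y \<longleftrightarrow> a \<le> res z (m x y)" for a
    by (simp add: le_res_iff mult_ac)
  then show ?thesis by (blast intro: order.antisym)
qed

lemma res_by_top: "res y top = y"
  by (metis order.antisym le_res mult_top res_mult_le)

lemma res_by_bot: "res z bot = top"
  by (simp add: le_res_iff top_unique[symmetric])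

lemma res_prime:
  assumes "ml_prime m q" and "\<not> s \<le> q"
  shows "res q s = q"
proof (rule order.antisym)
  show "res q s \<le> q" using res_mult_le[of q s] assms unfolding ml_prime_def by blast
qed (rule le_res)

lemma principal_meet: "principal x \<Longrightarrow> inf y (m z x) = m (inf (res y x) z) x"
  and principal_join: "principal x \<Longrightarrow> sup y (res z x) = res (sup (m y x) z) x"
  unfolding ml_principal_def by blast+

lemma principal_weak_meet: "principal x \<Longrightarrow> y \<le> x \<Longrightarrow> y = m (res y x) x"
  using principal_meet[of x y top] by (simp add: top_mult inf.absorb1)

lemma principal_top: "principal top"
  unfolding ml_principal_def by (simp add: mult_top res_by_top)

lemma principal_bot: "principal bot"
  unfolding ml_principal_def by (simp add: res_by_bot)

lemma principal_mult:
  assumes x: "principal x" and y: "principal y"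
  shows "principal (m x y)"
  unfolding ml_principal_def
proof (intro allI conjI)
  fix a b
  have "inf a (m b (m x y)) = inf a (m (m b y) x)" by (simp add: mult_ac)
  also have "\<dots> = m (inf (res a x) (m b y)) x" by (rule principal_meet[OF x])
  also have "inf (res a x) (m b y) = m (inf (res (res a x) y) b) y" by (rule principal_meet[OF y])
  finally show "inf a (m b (m x y)) = m (inf (res a (m x y)) b) (m x y)"
    by (simp add: res_res mult_ac)
  have "sup a (res b (m x y)) = sup a (res (res b x) y)" by (simp add: res_res)
  also have "\<dots> = res (sup (m a y) (res b x)) y" by (rule principal_join[OF y])
  also have "sup (m a y) (res b x) = res (sup (m (m a y) x) b) x" by (rule principal_join[OF x])
  finally show "sup a (res b (m x y)) = res (sup (m a (m x y)) b) (m x y)"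
    by (simp add: res_res mult_ac)
qed

lemma meet_principal_if_weak_meet_cancellable:
  assumes weak_meet: "\<And>y. y \<le> x \<Longrightarrow> y = m (res y x) x"
    and cancel: "\<And>c e. m c x \<le> m e x \<Longrightarrow> c \<le> e"
  shows "inf y (m z x) = m (inf (res y x) z) x"
proof (rule order.antisym)
  define e where "e = res (inf y (m z x)) x"
  have e: "inf y (m z x) = m e x"
    unfolding e_def by (rule weak_meet) (simp add: le_infI2 mult_le_right)
  then have "m e x \<le> y" "m e x \<le> m z x" by (metis inf.cobounded1, metis inf.cobounded2)
  then have "e \<le> res y x" "e \<le> z" using cancel by (simp_all add: le_res_iff)
  then show "inf y (m z x) \<le> m (inf (res y x) z) x"
    unfolding e by (simp add: mult_mono_left)
  show "m (inf (res y x) z) x \<le> inf y (m z x)"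
    by (meson inf.cobounded1 inf.cobounded2 le_inf_iff mult_mono_left order_trans res_mult_le)
qed

end

locale mult_lattice_domain = multiplicative_lattice +
  assumes domain: "ml_domain m"
begin

lemma mult_eq_bot_iff: "m a b = bot \<longleftrightarrow> a = bot \<or> b = bot"
  using domain unfolding ml_domain_def ml_prime_def by (auto simp: bot_unique)

lemma res_bot: "x \<noteq> bot \<Longrightarrow> res bot x = bot"
  using res_mult_le[of bot x] by (simp add: bot_unique mult_eq_bot_iff)

lemma principal_res_mult: "principal x \<Longrightarrow> x \<noteq> bot \<Longrightarrow> res (m y x) x = y"
  using principal_join[of x y bot] by (simp add: res_bot)

lemma principal_cancel_le: "principal x \<Longrightarrow> x \<noteq> bot \<Longrightarrow> m a x \<le> m b x \<Longrightarrow> a \<le> b"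
  by (metis principal_res_mult le_res_iff)

lemma principal_cancel: "principal x \<Longrightarrow> x \<noteq> bot \<Longrightarrow> m a x = m b x \<Longrightarrow> a = b"
  by (metis principal_res_mult)

lemma factor_cancel_le:
  assumes "principal p" "p \<noteq> bot" "p = m a b" and "m c a \<le> m e a"
  shows "c \<le> e"
proof -
  have "m c p \<le> m e p" using mult_mono_left[OF assms(4), of b] by (simp add: assms(3) mult_ac)
  then show ?thesis using principal_cancel_le assms(1,2) by blast
qed

lemma principal_factor_left:
  assumes p: "principal p" "p \<noteq> bot" and ab: "p = m a b"
  shows "principal a"
proof -
  have ba: "p = m b a" using ab by (simp add: mult_commute)
  have cancel_b: "c \<le> e" if "m c b \<le> m e b" for c e
    using factor_cancel_le[OF p ba that] .
  have weak_meet: "y = m (res y a) a" if "y \<le> a" for y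
  proof -
    define e where "e = res (m y b) p"
    have "m y b \<le> p" using mult_mono_left[OF that] ab by simp
    then have "m y b = m (m e a) b"
      using principal_weak_meet[OF p(1)] unfolding e_def ab by (simp add: mult_ac)
    then have y: "y = m e a" by (metis cancel_b order.antisym order_refl)
    then have "e \<le> res y a" by (simp add: le_res_iff)
    then have "y \<le> m (res y a) a" using y by (simp add: mult_mono_left)
    then show ?thesis using res_mult_le by (rule order.antisym)
  qed
  show ?thesis unfolding ml_principal_def
  proof (intro allI conjI)
    fix y z
    show "inf y (m z a) = m (inf (res y a) z) a"
      by (rule meet_principal_if_weak_meet_cancellable[OF weak_meet factor_cancel_le[OF p ab]])
    show "sup y (res z a) = res (sup (m y a) z) a"
    proof (rule order.antisym)
      show "sup y (res z a) \<le> res (sup (m y a) z) a"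
        by (simp add: le_res_iff mult_sup_left le_supI1 le_supI2 res_mult_le)
      have "m (m (res (m z b) p) a) b \<le> m z b"
        using res_mult_le[of "m z b" p] by (simp add: ab mult_ac)
      then have "m (res (m z b) p) a \<le> z" by (rule cancel_b)
      then have "res (m z b) p \<le> res z a" by (simp add: le_res_iff)
      then have "res (sup (m y p) (m z b)) p \<le> sup y (res z a)"
        unfolding principal_join[OF p(1), symmetric] by (simp add: le_supI2)
      moreover have "m (res (sup (m y a) z) a) p \<le> sup (m y p) (m z b)"
        using mult_mono_left[OF res_mult_le[of "sup (m y a) z" a], of b]
        by (simp add: ab mult_sup_left mult_sup_right mult_ac)
      ultimately show "res (sup (m y a) z) a \<le> sup y (res z a)"
        unfolding le_res_iff[symmetric] by (rule order_trans[rotated])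
    qed
  qed
qed

lemma principal_factor_right: "principal p \<Longrightarrow> p \<noteq> bot \<Longrightarrow> p = m a b \<Longrightarrow> principal b"
  using principal_factor_left[of p b a] by (simp add: mult_commute)

lemma res_by_principal_prime:
  assumes q: "principal q" "q \<noteq> bot" "ml_prime m q" and t: "principal t" "\<not> t \<le> q"
  shows "res t q = t"
proof (rule order.antisym)
  have "m (res t q) q \<le> inf q t" by (simp add: res_mult_le mult_le_right)
  also have "\<dots> = m (res q t) t" using principal_meet[OF t(1), of q top] by (simp add: top_mult)
  also have "\<dots> = m t q" using res_prime[OF q(3) t(2)] by (simp add: mult_commute)
  finally show "res t q \<le> t" using principal_cancel_le[OF q(1,2)] by blast
qed (rule le_res)

end

locale sharp_mult_lattice = multiplicative_lattice +
  assumes sharp: "ml_sharp m"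
begin

lemma sharpE:
  assumes "m a1 a2 \<le> b"
  obtains b1 b2 where "a1 \<le> b1" "a2 \<le> b2" "b = m b1 b2"
  using sharp assms unfolding ml_sharp_def by blast

lemma sup_prime_square:
  assumes s: "principal s" and q: "ml_prime m q" "\<not> s \<le> q"
  shows "m (sup q s) (sup q s) = sup q (m s s)"
proof -
  define w where "w = sup q s"
  define b where "b = sup q (m s s)"
  have "m w w \<le> b"
    unfolding w_def b_def by (simp add: mult_sup_left mult_sup_right le_supI1 mult_le_left mult_le_right)
  then obtain b1 b2 where b: "w \<le> b1" "w \<le> b2" "b = m b1 b2" by (rule sharpE)
  (* Both sharp factors of b lie between w and res b s = w. *)
  have res_b: "res b s = w"
    using principal_join[OF s, of s q] res_prime[OF q] unfolding b_def w_def by (simp add: sup_commute)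
  have "s \<le> b1" "s \<le> b2" using b(1,2) unfolding w_def by simp_all
  then have "m b1 s \<le> b" "m b2 s \<le> b"
    using mult_mono_right[of s b2 b1] mult_mono_right[of s b1 b2] by (simp_all add: b(3) mult_commute)
  then have "b1 \<le> w" "b2 \<le> w" unfolding res_b[symmetric] by (simp_all add: le_res_iff)
  then show ?thesis using b unfolding w_def[symmetric] b_def[symmetric] by (metis order.antisym)
qed

end

locale principally_generated_sharp_domain = mult_lattice_domain + sharp_mult_lattice +
  assumes principally_generated: "\<forall>x. \<exists>S. (\<forall>s\<in>S. principal s) \<and> x = Sup S"
begin

lemma principal_below_not_le:
  assumes "\<not> y \<le> q"
  obtains s where "principal s" "s \<le> y" "\<not> s \<le> q"
proof -
  obtain S where S: "\<forall>s\<in>S. principal s" "y = Sup S" using principally_generated by blast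
  then obtain s where "s \<in> S" "\<not> s \<le> q" using assms by (auto intro: Sup_least)
  then show ?thesis using S that by (auto intro: Sup_upper)
qed

lemma principal_nonzero_below:
  assumes "x \<noteq> bot"
  obtains p where "principal p" "p \<noteq> bot" "p \<le> x"
  using principal_below_not_le[of x bot] assms by (metis bot_unique)

lemma principal_prime_maximal:
  assumes q: "principal q" "q \<noteq> bot" "ml_prime m q" and "q \<le> y"
  shows "y = q \<or> y = top"
proof (cases "y \<le> q")
  case True
  then show ?thesis using \<open>q \<le> y\<close> by simp
next
  case False
  then obtain s where s: "principal s" "s \<le> y" "\<not> s \<le> q" by (rule principal_below_not_le)
  define w where "w = sup q s"
  have ss: "principal (m s s)" "\<not> m s s \<le> q"
    using principal_mult[OF s(1) s(1)] q(3) s(3) unfolding ml_prime_def by blast+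
  (* q \<le> w w \<le> sup (w q) (s s); dividing by q gives top \<le> sup w (res (s s) q) = w. *)
  have "q \<le> m w w" unfolding w_def sup_prime_square[OF s(1) q(3) s(3)] by simp
  also have "m w w = sup (m w q) (sup (m q s) (m s s))"
    unfolding w_def by (simp add: mult_sup_left mult_sup_right mult_ac sup_assoc)
  also have "\<dots> \<le> sup (m w q) (m s s)"
  proof -
    have "m q s \<le> m q w" unfolding w_def by (simp add: mult_mono_right)
    then have "m q s \<le> m w q" by (metis mult_commute)
    then show ?thesis by (simp add: le_supI1)
  qed
  finally have "top \<le> res (sup (m w q) (m s s)) q" by (simp add: le_res_iff top_mult)
  also have "\<dots> = sup w (m s s)"
    using principal_join[OF q(1), of w "m s s"] res_by_principal_prime[OF q ss] by simp
  also have "\<dots> = w" unfolding w_def by (rule sup.absorb1) (simp add: le_supI2 mult_le_left)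
  finally have "top \<le> y" using s(2) \<open>q \<le> y\<close> unfolding w_def by (blast intro: order_trans sup_least)
  then show ?thesis by (simp add: top_unique)
qed

lemma least_principal_above:
  assumes "g \<noteq> bot"
  obtains c where "principal c" "g \<le> c" "\<And>s. principal s \<Longrightarrow> g \<le> s \<Longrightarrow> c \<le> s"
proof -
  obtain p where p: "principal p" "p \<noteq> bot" "p \<le> g" using assms by (rule principal_nonzero_below)
  define a where "a = res p g"
  have "m g a \<le> p" unfolding a_def using res_mult_le by (simp add: mult_commute)
  then obtain c d where cd: "g \<le> c" "a \<le> d" "p = m c d" by (rule sharpE)
  have d: "principal d" "d \<noteq> bot"
    using principal_factor_right[OF p(1,2) cd(3)] p(2) cd(3) by auto
  (* Every principal s \<ge> g has res p s \<le> a \<le> d, and cancelling d gives c \<le> s. *)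
  have "c \<le> s" if s: "principal s" "g \<le> s" for s
  proof -
    have p_eq: "p = m (res p s) s" using principal_weak_meet[OF s(1)] p(3) s(2) by simp
    have "m (res p s) g \<le> m (res p s) s" using s(2) by (rule mult_mono_right)
    also have "\<dots> \<le> p" by (rule res_mult_le)
    finally have "res p s \<le> a" unfolding a_def by (simp add: le_res_iff)
    then have "res p s \<le> d" using cd(2) by (rule order_trans)
    then have "m c d \<le> m s d" using mult_mono_left p_eq cd(3) by (metis mult_commute)
    then show "c \<le> s" using principal_cancel_le[OF d] by blast
  qed
  then show ?thesis using that principal_factor_left[OF p(1,2) cd(3)] cd(1) by blast
qed

definition mpow :: "'a \<Rightarrow> nat \<Rightarrow> 'a" where
  "mpow v n = (m v ^^ n) top"

lemma mpow_0 [simp]: "mpow v 0 = top"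
  and mpow_Suc [simp]: "mpow v (Suc n) = m v (mpow v n)"
  by (simp_all add: mpow_def)

lemma principal_mpow: "principal v \<Longrightarrow> principal (mpow v n)"
  by (induction n) (simp_all add: principal_top principal_mult)

lemma principal_below_powers_eq_top:
  assumes x: "principal x" "x \<noteq> bot" and v: "principal v" and below: "\<And>n. x \<le> mpow v n"
  shows "v = top"
proof -
  define g where "g = Inf (range (mpow v))"
  have "x \<le> g" unfolding g_def using below by (auto intro: Inf_greatest)
  then have "g \<noteq> bot" using x(2) by (auto simp: bot_unique)
  then obtain c where c: "principal c" "g \<le> c"
    and least: "\<And>s. principal s \<Longrightarrow> g \<le> s \<Longrightarrow> c \<le> s"
    by (rule least_principal_above) blast
  have c_mpow: "c \<le> mpow v n" for n
    using least[OF principal_mpow[OF v]] unfolding g_def by (auto intro: Inf_lower)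
  have "v \<noteq> bot" using below[of 1] x(2) by (auto simp: bot_unique mult_top)
  (* The least principal c above g satisfies res c v \<le> g, hence c = m c v. *)
  define c' where "c' = res c v"
  have c_eq: "c = m c' v" unfolding c'_def using principal_weak_meet[OF v] c_mpow[of 1] by (simp add: mult_top)
  have "c' \<le> mpow v n" for n
    using c_mpow[of "Suc n"] principal_cancel_le[OF v \<open>v \<noteq> bot\<close>, of c'] by (simp add: c_eq mult_commute)
  then have "c' \<le> g" unfolding g_def by (auto intro: Inf_greatest)
  then have "c' \<le> c" using c(2) by (rule order_trans)
  then have "m v c = m top c" using c_eq mult_le_left[of c' v] by (simp add: mult_commute top_mult order.antisym)
  moreover have "c \<noteq> bot" using \<open>g \<noteq> bot\<close> c(2) by (auto simp: bot_unique)
  ultimately show "v = top" using principal_cancel[OF c(1)] by blast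
qed

inductive prime_product :: "'a \<Rightarrow> bool" where
  prime_product_top: "prime_product top"
| prime_product_mult_prime:
    "principal q \<Longrightarrow> q \<noteq> bot \<Longrightarrow> ml_prime m q \<Longrightarrow> prime_product c \<Longrightarrow> prime_product (m q c)"

lemma prime_product_mult: "prime_product a \<Longrightarrow> prime_product b \<Longrightarrow> prime_product (m a b)"
  by (induction rule: prime_product.induct) (simp_all add: top_mult mult_assoc prime_product_mult_prime)

lemma prime_product_mpow: "prime_product v \<Longrightarrow> prime_product (mpow v n)"
  by (induction n) (simp_all add: prime_product_top prime_product_mult)

lemma principal_above_prime_product: "prime_product c \<Longrightarrow> c \<le> d \<Longrightarrow> principal d"
proof (induction arbitrary: d rule: prime_product.induct)
  case prime_product_top
  then show ?case by (simp add: top_unique principal_top)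
next
  case (prime_product_mult_prime q c)
  obtain d1 d2 where d: "q \<le> d1" "c \<le> d2" "d = m d1 d2"
    using prime_product_mult_prime.prems by (rule sharpE)
  have "principal d1"
    using principal_prime_maximal[OF prime_product_mult_prime.hyps(1-3) d(1)]
      prime_product_mult_prime.hyps(1) principal_top by blast
  then show ?case using prime_product_mult_prime.IH[OF d(2)] d(3) principal_mult by simp
qed

lemma not_prime_product_factor:
  assumes u: "principal u" "u \<noteq> bot" "\<not> prime_product u"
  obtains x v where "principal x" "x \<noteq> bot" "\<not> prime_product x" "principal v" "v \<noteq> bot" "v \<noteq> top"
    "u = m x v"
proof -
  have "u \<noteq> top" using u(3) prime_product_top by blast
  moreover have "\<not> ml_prime m u"
    using u prime_product_mult_prime[OF u(1,2) _ prime_product_top] by (auto simp: mult_top)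
  ultimately obtain a1 a2 where a: "m a1 a2 \<le> u" "\<not> a1 \<le> u" "\<not> a2 \<le> u"
    unfolding ml_prime_def by blast
  then obtain b1 b2 where b: "a1 \<le> b1" "a2 \<le> b2" "u = m b1 b2" by (metis sharpE)
  have "principal b1" "principal b2"
    using principal_factor_left[OF u(1,2) b(3)] principal_factor_right[OF u(1,2) b(3)] .
  moreover have "b1 \<noteq> bot" "b2 \<noteq> bot" using u(2) b(3) by auto
  moreover have "b1 \<noteq> top" "b2 \<noteq> top" using a b by (auto simp: top_mult mult_top)
  moreover have "\<not> prime_product b1 \<or> \<not> prime_product b2" using u(3) b(3) prime_product_mult by blast
  ultimately show ?thesis using that b(3) mult_commute by metis
qed

lemma below_powers_if_no_branching:
  assumes no_branching: "\<And>z. principal z \<Longrightarrow> u \<le> z \<Longrightarrow> \<not> prime_product z \<Longrightarrow> m z x \<le> u"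
    and x: "principal x" "x \<noteq> bot" "\<not> prime_product x"
    and v: "principal v" "prime_product v" and u: "u = m x v"
  shows "x \<le> mpow v n"
proof (induction n)
  case 0
  then show ?case by simp
next
  case (Suc n)
  define z where "z = res x (mpow v n)"
  have x_eq: "x = m z (mpow v n)"
    unfolding z_def using principal_weak_meet[OF principal_mpow[OF v(1)] Suc.IH] .
  have "principal z" using principal_factor_left[OF x(1,2) x_eq] .
  moreover have "u \<le> z" using u x_eq mult_le_left order_trans by metis
  moreover have "\<not> prime_product z" using x(3) x_eq prime_product_mult prime_product_mpow[OF v(2)] by metis
  ultimately have "m z x \<le> u" by (rule no_branching)
  also have "u = m v x" using u by (rule trans[OF _ mult_commute])
  finally have "z \<le> v" using principal_cancel_le[OF x(1,2)] by blast
  then show ?case using x_eq by (simp add: mult_mono_left)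
qed

lemma branching_pair:
  assumes u: "principal u" "u \<noteq> bot" "\<not> prime_product u"
  obtains x y where "principal x" "principal y" "u \<le> x" "u \<le> y"
    "\<not> prime_product x" "\<not> prime_product y" "\<not> m x y \<le> u"
proof (rule ccontr)
  assume "\<not> thesis"
  then have no_branching: "\<And>x y. principal x \<Longrightarrow> principal y \<Longrightarrow> u \<le> x \<Longrightarrow> u \<le> y \<Longrightarrow>
      \<not> prime_product x \<Longrightarrow> \<not> prime_product y \<Longrightarrow> m x y \<le> u"
    using that by blast
  obtain x v where x: "principal x" "x \<noteq> bot" "\<not> prime_product x"
    and v: "principal v" "v \<noteq> bot" "v \<noteq> top" and u_eq: "u = m x v"
    using not_prime_product_factor[OF u] by blast
  have "u \<le> x" "u \<le> v" using u_eq by (simp_all add: mult_le_left mult_le_right)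
  show False
  proof (cases "prime_product v")
    case True
    have "x \<le> mpow v n" for n
      using below_powers_if_no_branching[OF no_branching x v(1) True u_eq] x(1) \<open>u \<le> x\<close> x(3) by blast
    then show False using principal_below_powers_eq_top[OF x(1,2) v(1)] v(3) by blast
  next
    case False
    have "m x x \<le> m v x" "m v v \<le> m x v"
      using no_branching[OF x(1) x(1) \<open>u \<le> x\<close> \<open>u \<le> x\<close> x(3) x(3)]
        no_branching[OF v(1) v(1) \<open>u \<le> v\<close> \<open>u \<le> v\<close> False False] u_eq
      by (simp_all add: mult_commute)
    then have "u = m x x"
      using principal_cancel_le[OF x(1,2)] principal_cancel_le[OF v(1,2)] u_eq by (metis order.antisym)
    obtain e f where e: "principal e" "e \<noteq> bot" "\<not> prime_product e"
      and f: "f \<noteq> top" and x_eq: "x = m e f"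
      using not_prime_product_factor[OF x] by blast
    have "u \<le> e" using \<open>u \<le> x\<close> x_eq mult_le_left order_trans by metis
    then have "m top (m e e) \<le> m (m f f) (m e e)"
      using no_branching[OF e(1) e(1) _ _ e(3) e(3)] \<open>u = m x x\<close> x_eq by (simp add: top_mult mult_ac)
    then have "top \<le> m f f"
      using principal_cancel_le[OF principal_mult[OF e(1) e(1)]] e(2) by (simp add: mult_eq_bot_iff)
    then show False using f mult_le_left[of f f] by (simp add: top_unique)
  qed
qed

definition witness_intervals :: "'a set set" where
  "witness_intervals = {{m t w..t} | t w. principal t \<and> t \<noteq> bot \<and>
    principal w \<and> w \<noteq> bot \<and> \<not> prime_product w}"

lemma witness_interval_split:
  assumes "J \<in> witness_intervals"
  shows "\<exists>K\<in>witness_intervals. \<exists>K'\<in>witness_intervals. K \<subseteq> J \<and> K' \<subseteq> J \<and> K \<inter> K' = {}"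
proof -
  obtain t w where J: "J = {m t w..t}" and t: "principal t" "t \<noteq> bot"
    and w: "principal w" "w \<noteq> bot" "\<not> prime_product w"
    using assms unfolding witness_intervals_def by blast
  obtain x y where x: "principal x" "w \<le> x" "\<not> prime_product x"
    and y: "principal y" "w \<le> y" "\<not> prime_product y" and xy: "\<not> m x y \<le> w"
    using branching_pair[OF w] by blast
  define r where "r = res w y"
  have w_eq: "w = m r y" unfolding r_def using principal_weak_meet[OF y(1,2)] .
  have "x \<noteq> bot" "y \<noteq> bot" using w(2) x(2) y(2) by (auto simp: bot_unique)
  have r: "principal r" "r \<noteq> bot" using principal_factor_left[OF w(1,2) w_eq] w(2) w_eq by auto
  have tr: "principal (m t r)" "m t r \<noteq> bot"
    using principal_mult[OF t(1) r(1)] t(2) r(2) by (simp_all add: mult_eq_bot_iff)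
  have "{m t x..t} \<in> witness_intervals" "{m (m t r) y..m t r} \<in> witness_intervals"
    unfolding witness_intervals_def using t x \<open>x \<noteq> bot\<close> tr y \<open>y \<noteq> bot\<close> by blast+
  moreover have "{m t x..t} \<subseteq> J" "{m (m t r) y..m t r} \<subseteq> J"
    unfolding J w_eq by (simp_all add: mult_assoc mult_mono_right mult_le_left w_eq[symmetric] x(2))
  moreover have "{m t x..t} \<inter> {m (m t r) y..m t r} = {}"
  proof -
    have "\<not> m x t \<le> m r t"
      using principal_cancel_le[OF t] xy mult_mono_left[of x r y] unfolding w_eq by blast
    then show ?thesis by (auto simp: mult_commute dest: order_trans)
  qed
  ultimately show ?thesis by blast
qed

lemma prime_product_if_countable:
  assumes "countable (UNIV :: 'a set)" and u: "principal u" "u \<noteq> bot"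
  shows "prime_product u"
proof (rule ccontr)
  assume "\<not> prime_product u"
  then have "{m u u..u} \<in> witness_intervals" unfolding witness_intervals_def using u by blast
  moreover have "\<exists>a b. a \<le> b \<and> J = {a..b}" if "J \<in> witness_intervals" for J
    using that unfolding witness_intervals_def by (auto intro: mult_le_left)
  ultimately have "uncountable (UNIV :: 'a set)"
    using uncountable_if_splitting_intervals witness_interval_split by blast
  with assms(1) show False by simp
qed

lemma principal_if_countable:
  assumes "countable (UNIV :: 'a set)"
  shows "principal x"
proof (cases "x = bot")
  case True
  then show ?thesis by (simp add: principal_bot)
next
  case False
  then obtain p where "principal p" "p \<noteq> bot" "p \<le> x" by (rule principal_nonzero_below)
  then show ?thesis using prime_product_if_countable[OF assms] principal_above_prime_product by blast
qed

end

theorem corollary3p15: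
  fixes m :: "'a::complete_lattice \<Rightarrow> 'a \<Rightarrow> 'a"
  assumes "countable (UNIV :: 'a set)"
    and "C_lattice m"
    and "ml_domain m"
    and "\<forall>x. \<exists>S. (\<forall>s\<in>S. ml_principal m s) \<and> x = Sup S"
    and "ml_sharp m"
  shows "\<forall>x. ml_principal m x"
proof -
  interpret principally_generated_sharp_domain m
    using assms(2-5) unfolding C_lattice_def by unfold_locales blast+
  show ?thesis using principal_if_countable[OF assms(1)] by blast
qed

end
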